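(* Let $M$ be the group von Neumann algebra of the right-angled Artin group with generators $u_1,v_1,v_2,v_3,u_2$ whose only relations are $[u_1,v_1]=[v_1,v_2]=[v_2,v_3]=[v_3,u_2]=1$, with generators identified with the canonical Haar unitaries in $M$, and let $\mathcal U$ be a free ultrafilter on $\mathbb N$. If $w\in\{u_1\}'\cap\mathcal H(M^{\mathcal U})$, then $E_{(\{v_2\}'')^{\mathcal U}}(w)=0$.
   Context: $M$ carries its canonical trace $\tau$; $M^{\mathcal U}$ is the tracial ultrapower containing $M$ diagonally, and $(\{v_2\}'')^{\mathcal U}\subset M^{\mathcal U}$ is the ultrapower of the von Neumann subalgebra generated by $v_2$. $E_B$ denotes the trace-preserving conditional expectation onto a von Neumann subalgebra $B$. A unitary is Haar if $\tau(u^n)=0$ for all $n\ge1$; $\mathcal H(M^{\mathcal U})$ is the set of Haar unitaries of $M^{\mathcal U}$; $\{u_1\}'$ is the commutant of $u_1$ in $M^{\mathcal U}$. *)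

theory Defs
  imports "HOL-Analysis.Analysis"
begin

datatype gen = U1 | V1 | V2 | V3 | U2

definition gadj :: "gen \<Rightarrow> gen \<Rightarrow> bool" where
  "gadj a b \<longleftrightarrow> {a, b} \<in> {{U1, V1}, {V1, V2}, {V2, V3}, {V3, U2}}"

lemma gadj_sym: "gadj a b \<Longrightarrow> gadj b a"
  unfolding gadj_def by (simp add: insert_commute)

text \<open>A letter (s, True) stands for s, (s, False) for its inverse.\<close>
type_synonym letter = "gen \<times> bool"

inductive rstep :: "letter list \<Rightarrow> letter list \<Rightarrow> bool" where
  cancel: "rstep (xs @ (a, e) # (a, \<not> e) # ys) (xs @ ys)"
| swap: "gadj a b \<Longrightarrow> rstep (xs @ (a, e) # (b, f) # ys) (xs @ (b, f) # (a, e) # ys)"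

definition req :: "letter list \<Rightarrow> letter list \<Rightarrow> bool" where
  "req = equivclp rstep"

quotient_type raag = "letter list" / req
  unfolding req_def by simp

lemma equivclp_map:
  assumes "equivclp r x y" and "\<And>a b. r a b \<Longrightarrow> equivclp r (f a) (f b)"
  shows "equivclp r (f x) (f y)"
  using assms(1)
proof (induction rule: equivclp_induct)
  case base then show ?case by simp
next
  case (step y z)
  then show ?case
    by (metis assms(2) equivclp_sym equivclp_trans)
qed

lemma rstep_append_left: "rstep a b \<Longrightarrow> rstep (zs @ a) (zs @ b)"
proof (induction rule: rstep.induct)
  case (cancel xs a e ys)
  then show ?case using rstep.cancel[of "zs @ xs"] by simp
next
  case (swap a b xs e f ys)
  then show ?case using rstep.swap[of a b "zs @ xs"] by simp
qed

lemma rstep_append_right: "rstep a b \<Longrightarrow> rstep (a @ zs) (b @ zs)"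
proof (induction rule: rstep.induct)
  case (cancel xs a e ys)
  then show ?case using rstep.cancel[of xs a e "ys @ zs"] by simp
next
  case (swap a b xs e f ys)
  then show ?case using rstep.swap[of a b xs e f "ys @ zs"] by simp
qed

definition winv :: "letter list \<Rightarrow> letter list" where
  "winv w = rev (map (\<lambda>(a, e). (a, \<not> e)) w)"

lemma rstep_winv: "rstep a b \<Longrightarrow> rstep (winv a) (winv b)"
proof (induction rule: rstep.induct)
  case (cancel xs a e ys)
  then show ?case
    using rstep.cancel[of "winv ys" a e "winv xs"] by (simp add: winv_def)
next
  case (swap a b xs e f ys)
  then show ?case
    using rstep.swap[of b a "winv ys" "\<not> f" "\<not> e" "winv xs"]
    by (simp add: winv_def gadj_sym)
qed

lift_definition rmult :: "raag \<Rightarrow> raag \<Rightarrow> raag" is "(@)"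
proof -
  fix a b c d assume "req a b" "req c d"
  have "equivclp rstep (a @ c) (b @ c)"
    using \<open>req a b\<close> unfolding req_def
    by (rule equivclp_map[where f = "\<lambda>x. x @ c"]) (auto intro: rstep_append_right)
  moreover have "equivclp rstep (b @ c) (b @ d)"
    using \<open>req c d\<close> unfolding req_def
    by (rule equivclp_map[where f = "\<lambda>x. b @ x"]) (auto intro: rstep_append_left)
  ultimately show "req (a @ c) (b @ d)" unfolding req_def by (rule equivclp_trans)
qed

lift_definition rinv :: "raag \<Rightarrow> raag" is winv
  unfolding req_def
  by (rule equivclp_map) (auto intro: rstep_winv)

lift_definition rone :: raag is "[]" .

lift_definition rgen :: "gen \<Rightarrow> raag" is "\<lambda>a. [(a, True)]" .

type_synonym vec = "raag \<Rightarrow> complex"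
type_synonym op = "vec \<Rightarrow> vec"

definition l2 :: "vec set" where
  "l2 = {f. (\<lambda>g. (cmod (f g))\<^sup>2) summable_on UNIV}"

definition l2inner :: "vec \<Rightarrow> vec \<Rightarrow> complex" where
  "l2inner f h = (\<Sum>\<^sub>\<infinity>g. cnj (f g) * h g)"

definition l2norm :: "vec \<Rightarrow> real" where
  "l2norm f = sqrt (\<Sum>\<^sub>\<infinity>g. (cmod (f g))\<^sup>2)"

text \<open>Bounded linear operators on l2(G); to make operators extensional they are
  required to vanish outside l2(G).\<close>
definition bop :: "op set" where
  "bop = {T. (\<forall>f\<in>l2. T f \<in> l2)
           \<and> (\<forall>f\<in>l2. \<forall>h\<in>l2. \<forall>c. T (\<lambda>x. f x + c * h x) = (\<lambda>x. T f x + c * T h x))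
           \<and> (\<exists>C. \<forall>f\<in>l2. l2norm (T f) \<le> C * l2norm f)
           \<and> (\<forall>f. f \<notin> l2 \<longrightarrow> T f = (\<lambda>_. 0))}"

definition commutant :: "op set \<Rightarrow> op set" where
  "commutant S = {T \<in> bop. \<forall>A\<in>S. \<forall>f\<in>l2. T (A f) = A (T f)}"

definition adjoint :: "op \<Rightarrow> op" where
  "adjoint T = (THE S. S \<in> bop \<and> (\<forall>f\<in>l2. \<forall>h\<in>l2. l2inner (S f) h = l2inner f (T h)))"

definition lambda_op :: "raag \<Rightarrow> op" where
  "lambda_op g = (\<lambda>f. if f \<in> l2 then (\<lambda>h. f (rmult (rinv g) h)) else (\<lambda>_. 0))"

definition one_op :: op where "one_op = lambda_op rone"

definition zero_op :: op where "zero_op = (\<lambda>f _. 0)"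

definition LG :: "op set" where
  "LG = commutant (commutant (range lambda_op))"

definition vN_v2 :: "op set" where
  "vN_v2 = commutant (commutant {lambda_op (rgen V2)})"

definition delta_e :: vec where
  "delta_e = (\<lambda>g. if g = rone then 1 else 0)"

definition tau :: "op \<Rightarrow> complex" where
  "tau x = l2inner delta_e (x delta_e)"

definition condexp :: "op set \<Rightarrow> op \<Rightarrow> op" where
  "condexp B x = (THE y. y \<in> B \<and> (\<forall>b\<in>B. tau (y \<circ> b) = tau (x \<circ> b)))"

definition free_ultrafilter :: "nat filter \<Rightarrow> bool" where
  "free_ultrafilter U \<longleftrightarrow> U \<noteq> bot
     \<and> (\<forall>P. eventually P U \<or> eventually (\<lambda>n. \<not> P n) U)
     \<and> (\<forall>n. eventually (\<lambda>m. m \<noteq> n) U)"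

text \<open>Representing sequences of elements of the ultrapower B^U: uniformly bounded
  sequences in B.\<close>
definition in_ultrapower :: "op set \<Rightarrow> (nat \<Rightarrow> op) \<Rightarrow> bool" where
  "in_ultrapower B X \<longleftrightarrow> (\<forall>n. X n \<in> B)
     \<and> (\<exists>C. \<forall>n. \<forall>f\<in>l2. l2norm (X n f) \<le> C * l2norm f)"

text \<open>Equality in M^U: the 2-norm ||x_n - y_n||_2 = ||(x_n - y_n) delta_e|| tends to 0 along U.\<close>
definition ueq :: "nat filter \<Rightarrow> (nat \<Rightarrow> op) \<Rightarrow> (nat \<Rightarrow> op) \<Rightarrow> bool" where
  "ueq U X Y \<longleftrightarrow> ((\<lambda>n. l2norm (\<lambda>g. X n delta_e g - Y n delta_e g)) \<longlongrightarrow> 0) U"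

definition haar_unitary_U :: "nat filter \<Rightarrow> (nat \<Rightarrow> op) \<Rightarrow> bool" where
  "haar_unitary_U U W \<longleftrightarrow> in_ultrapower LG W
     \<and> ueq U (\<lambda>n. adjoint (W n) \<circ> W n) (\<lambda>n. one_op)
     \<and> ueq U (\<lambda>n. W n \<circ> adjoint (W n)) (\<lambda>n. one_op)
     \<and> (\<forall>k::nat. k \<ge> 1 \<longrightarrow> ((\<lambda>n. tau (W n ^^ k)) \<longlongrightarrow> 0) U)"

end

theory Submission
  imports Defs
begin

text \<open>Write xi for w delta_e and H for the subgroup generated by v2.  The conditional
  expectation onto L(H) restricts the coefficients of an element of L(G) to H, so the claim is
  that xi carries asymptotically no mass on H.  At the identity its coefficient is tau(w), which
  tends to 0.  On H - {e} one uses u1: since w asymptotically commutes with u1, xi is almost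
  invariant under conjugation by u1, while the conjugates u1^m (H - {e}) u1^-m, m = 0, 1, ...,
  are pairwise disjoint, as a representation of G in SL(2, Z) shows.  An almost invariant vector
  of bounded norm cannot put much mass on each of N disjoint sets.\<close>

section \<open>The group structure and the subgroup generated by v2\<close>

lemma winv_append_req_Nil: "req (winv w @ w) []"
proof (induction w)
  case Nil
  then show ?case by (simp add: winv_def req_def)
next
  case (Cons l w)
  obtain a e where l: "l = (a, e)" by (cases l)
  have "winv (l # w) @ l # w = winv w @ (a, \<not> e) # (a, \<not> \<not> e) # w"
    by (simp add: winv_def l)
  moreover have "rstep (winv w @ (a, \<not> e) # (a, \<not> \<not> e) # w) (winv w @ w)"
    by (rule rstep.cancel)
  ultimately have "req (winv (l # w) @ l # w) (winv w @ w)"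
    unfolding req_def by (metis r_into_equivclp)
  with Cons show ?case unfolding req_def by (metis equivclp_trans)
qed

instantiation raag :: group_add
begin

definition "plus_raag = rmult"
definition "zero_raag = rone"
definition "uminus_raag = rinv"
definition "minus_raag a b = rmult a (rinv b)"

instance
proof
  fix a b c :: raag
  show "a + b + c = a + (b + c)" unfolding plus_raag_def by transfer (simp add: req_def)
  show "0 + a = a" unfolding plus_raag_def zero_raag_def by transfer (simp add: req_def)
  show "a + 0 = a" unfolding plus_raag_def zero_raag_def by transfer (simp add: req_def)
  show "- a + a = 0" unfolding plus_raag_def zero_raag_def uminus_raag_def
    by transfer (rule winv_append_req_Nil)
  show "a + - b = a - b" by (simp add: plus_raag_def minus_raag_def uminus_raag_def)
qed

end

definition u1 :: raag where "u1 = rgen U1"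
definition v2 :: raag where "v2 = rgen V2"

definition v2_pow :: "int \<Rightarrow> raag" where
  "v2_pow n = (if 0 \<le> n then ((+) v2 ^^ nat n) 0 else ((+) (- v2) ^^ nat (- n)) 0)"

lemma v2_pow_0 [simp]: "v2_pow 0 = 0"
  by (simp add: v2_pow_def)

lemma v2_pow_1: "v2_pow 1 = v2"
  by (simp add: v2_pow_def)

lemma v2_pow_succ: "v2_pow (n + 1) = v2 + v2_pow n"
proof (cases "0 \<le> n")
  case True
  then have "nat (n + 1) = Suc (nat n)" by simp
  with True show ?thesis by (simp add: v2_pow_def)
next
  case False
  then have "nat (- n) = Suc (nat (- (n + 1)))" by simp
  with False show ?thesis by (simp add: v2_pow_def)
qed

lemma v2_pow_pred: "v2_pow (n - 1) = - v2 + v2_pow n"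
  using v2_pow_succ[of "n - 1"] by simp

lemma v2_pow_add: "v2_pow (m + n) = v2_pow m + v2_pow n"
proof (induction m rule: int_induct[where k = 0])
  case base
  then show ?case by simp
next
  case (step1 i)
  have "v2_pow (i + 1 + n) = v2 + v2_pow (i + n)"
    using v2_pow_succ[of "i + n"] by (simp add: ac_simps)
  then show ?case using step1 by (simp add: v2_pow_succ add.assoc)
next
  case (step2 i)
  have "v2_pow (i - 1 + n) = - v2 + v2_pow (i + n)"
    using v2_pow_pred[of "i + n"] by (simp add: algebra_simps)
  then show ?case using step2 by (simp add: v2_pow_pred add.assoc)
qed

lemma v2_pow_uminus: "v2_pow (- n) = - v2_pow n"
  using v2_pow_add[of "- n" n] by (simp add: eq_neg_iff_add_eq_0)

definition v2_subgroup :: "raag set" where "v2_subgroup = range v2_pow"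

lemma v2_pow_in_v2_subgroup [simp]: "v2_pow n \<in> v2_subgroup"
  by (simp add: v2_subgroup_def)

lemma zero_in_v2_subgroup [simp]: "0 \<in> v2_subgroup"
  using v2_pow_in_v2_subgroup[of 0] by simp

lemma v2_in_v2_subgroup: "v2 \<in> v2_subgroup"
  using v2_pow_in_v2_subgroup[of 1] by (simp only: v2_pow_1)

lemma add_in_v2_subgroup: "a \<in> v2_subgroup \<Longrightarrow> b \<in> v2_subgroup \<Longrightarrow> a + b \<in> v2_subgroup"
  by (auto simp: v2_subgroup_def v2_pow_add[symmetric])

lemma uminus_in_v2_subgroup_iff [simp]: "- a \<in> v2_subgroup \<longleftrightarrow> a \<in> v2_subgroup"
  by (metis minus_minus rangeE rangeI v2_pow_uminus v2_subgroup_def)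

lemma v2_subgroup_add_left_iff:
  assumes "g \<in> v2_subgroup"
  shows "g + h \<in> v2_subgroup \<longleftrightarrow> h \<in> v2_subgroup"
  by (metis add_in_v2_subgroup assms minus_add_cancel uminus_in_v2_subgroup_iff)

lemma v2_subgroup_add_right_iff:
  assumes "g \<in> v2_subgroup"
  shows "h + g \<in> v2_subgroup \<longleftrightarrow> h \<in> v2_subgroup"
  by (metis add_in_v2_subgroup assms add.assoc add.right_inverse add_0_right uminus_in_v2_subgroup_iff)

subsection \<open>A representation in SL(2, Z)\<close>

text \<open>(a, b, c, d) stands for the matrix with rows (a, b) and (c, d).\<close>

type_synonym mat2 = "int \<times> int \<times> int \<times> int"

fun mat2_mult :: "mat2 \<Rightarrow> mat2 \<Rightarrow> mat2" where
  "mat2_mult (a, b, c, d) (e, f, g, h) = (a*e + b*g, a*f + b*h, c*e + d*g, c*f + d*h)"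

definition mat2_one :: mat2 where "mat2_one = (1, 0, 0, 1)"

lemma mat2_mult_assoc: "mat2_mult (mat2_mult x y) z = mat2_mult x (mat2_mult y z)"
  by (cases x; cases y; cases z) (simp add: algebra_simps)

lemma mat2_mult_one [simp]: "mat2_mult mat2_one x = x" "mat2_mult x mat2_one = x"
  by (cases x; simp add: mat2_one_def)+

text \<open>u1 and v2 go to the two elementary unipotent matrices with entry 2 and every other
  generator to 1; this respects the defining relations, since each of them involves v1 or v3.\<close>

fun letter_mat :: "letter \<Rightarrow> mat2" where
  "letter_mat (U1, e) = (if e then (1, 2, 0, 1) else (1, -2, 0, 1))"
| "letter_mat (V2, e) = (if e then (1, 0, 2, 1) else (1, 0, -2, 1))"
| "letter_mat (_, e) = mat2_one"

fun word_mat :: "letter list \<Rightarrow> mat2" where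
  "word_mat [] = mat2_one"
| "word_mat (l # w) = mat2_mult (letter_mat l) (word_mat w)"

lemma word_mat_append: "word_mat (xs @ ys) = mat2_mult (word_mat xs) (word_mat ys)"
  by (induction xs) (simp_all add: mat2_mult_assoc)

lemma word_mat_rstep: "rstep x y \<Longrightarrow> word_mat x = word_mat y"
proof (induction rule: rstep.induct)
  case (cancel xs a e ys)
  have "mat2_mult (letter_mat (a, e)) (letter_mat (a, \<not> e)) = mat2_one"
    by (cases a; cases e; simp add: mat2_one_def)
  then show ?case by (simp add: word_mat_append mat2_mult_assoc[symmetric])
next
  case (swap a b xs e f ys)
  then have "mat2_mult (letter_mat (a, e)) (letter_mat (b, f))
      = mat2_mult (letter_mat (b, f)) (letter_mat (a, e))"
    by (cases a; cases b; simp add: gadj_def doubleton_eq_iff)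
  then show ?case by (simp add: word_mat_append) (metis mat2_mult_assoc)
qed

lemma word_mat_req: "req x y \<Longrightarrow> word_mat x = word_mat y"
  unfolding req_def by (induction rule: equivclp_induct) (auto dest: word_mat_rstep)

lift_definition mat_rep :: "raag \<Rightarrow> mat2" is word_mat
  by (rule word_mat_req)

lemma mat_rep_add: "mat_rep (a + b) = mat2_mult (mat_rep a) (mat_rep b)"
  unfolding plus_raag_def by transfer (rule word_mat_append)

lemma mat_rep_u1: "mat_rep u1 = (1, 2, 0, 1)" and mat_rep_uminus_u1: "mat_rep (- u1) = (1, -2, 0, 1)"
  and mat_rep_v2: "mat_rep v2 = (1, 0, 2, 1)" and mat_rep_uminus_v2: "mat_rep (- v2) = (1, 0, -2, 1)"
  unfolding u1_def v2_def uminus_raag_def by (transfer; simp add: mat2_one_def winv_def)+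

lemma mat_rep_v2_pow: "mat_rep (v2_pow n) = (1, 0, 2 * n, 1)"
proof (induction n rule: int_induct[where k = 0])
  case base
  have "mat_rep 0 = mat2_one" unfolding zero_raag_def by transfer simp
  then show ?case by (simp add: mat2_one_def)
next
  case (step1 i)
  then show ?case by (simp add: v2_pow_succ mat_rep_add mat_rep_v2 ring_distribs)
next
  case (step2 i)
  then show ?case by (simp add: v2_pow_pred mat_rep_add mat_rep_uminus_v2 ring_distribs)
qed

definition conj_u1 :: "raag \<Rightarrow> raag" where "conj_u1 g = u1 + g + - u1"

lemma bij_conj_u1: "bij conj_u1"
  by (rule bij_betw_byWitness[where f' = "\<lambda>g. - u1 + g + u1"]) (auto simp: conj_u1_def add.assoc)

lemma mat_rep_conj_u1_funpow:
  "mat_rep ((conj_u1 ^^ d) g) = mat2_mult (mat2_mult (1, 2 * int d, 0, 1) (mat_rep g)) (1, - 2 * int d, 0, 1)"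
proof (induction d)
  case 0
  then show ?case by (simp add: mat2_one_def[symmetric])
next
  case (Suc d)
  have "mat_rep ((conj_u1 ^^ Suc d) g)
      = mat2_mult (mat2_mult (1, 2, 0, 1) (mat_rep ((conj_u1 ^^ d) g))) (1, -2, 0, 1)"
    by (simp only: funpow.simps comp_apply conj_u1_def mat_rep_add mat_rep_u1 mat_rep_uminus_u1)
  moreover obtain a b c e where "mat_rep g = (a, b, c, e)" by (cases "mat_rep g")
  ultimately show ?case using Suc by (simp add: algebra_simps)
qed

text \<open>The upper right entry of the image of u1^d v2^n u1^-d is -8 d^2 n.\<close>

lemma conj_u1_funpow_v2_pow_notin:
  assumes "d > 0" and "n \<noteq> 0"
  shows "(conj_u1 ^^ d) (v2_pow n) \<notin> v2_subgroup"
proof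
  assume "(conj_u1 ^^ d) (v2_pow n) \<in> v2_subgroup"
  then obtain m where "(conj_u1 ^^ d) (v2_pow n) = v2_pow m" by (auto simp: v2_subgroup_def)
  then have "mat_rep ((conj_u1 ^^ d) (v2_pow n)) = mat_rep (v2_pow m)" by simp
  then show False using assms by (auto simp: mat_rep_conj_u1_funpow mat_rep_v2_pow algebra_simps)
qed

lemma disjoint_conj_u1_funpow_image:
  assumes "m \<noteq> m'"
  shows "(conj_u1 ^^ m) ` (v2_subgroup - {0}) \<inter> (conj_u1 ^^ m') ` (v2_subgroup - {0}) = {}"
proof -
  have "(conj_u1 ^^ i) a \<noteq> (conj_u1 ^^ j) b"
    if ij: "i < j" and a: "a \<in> v2_subgroup - {0}" and b: "b \<in> v2_subgroup - {0}" for i j a b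
  proof
    assume "(conj_u1 ^^ i) a = (conj_u1 ^^ j) b"
    also have "\<dots> = (conj_u1 ^^ i) ((conj_u1 ^^ (j - i)) b)"
      using \<open>i < j\<close> by (metis funpow_add le_add_diff_inverse less_imp_le comp_apply)
    finally have "a = (conj_u1 ^^ (j - i)) b"
      using bij_is_inj[OF bij_betw_funpow[OF bij_conj_u1]] by (meson injD)
    moreover obtain n where "b = v2_pow n" "n \<noteq> 0"
      using b by (auto simp: v2_subgroup_def) (metis v2_pow_0)
    ultimately show False
      using conj_u1_funpow_v2_pow_notin[of "j - i" n] ij a by simp
  qed
  then show ?thesis using assms by (auto simp: neq_iff) (metis neq_iff)+
qed

definition l2sq :: "vec \<Rightarrow> real" where
  "l2sq f = (\<Sum>\<^sub>\<infinity>g. (cmod (f g))\<^sup>2)"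

definition restr :: "raag set \<Rightarrow> vec \<Rightarrow> vec" where
  "restr A f = (\<lambda>k. if k \<in> A then f k else 0)"

definition delta :: "raag \<Rightarrow> vec" where
  "delta j = (\<lambda>h. if h = j then 1 else 0)"

lemma l2norm_eq_sqrt_l2sq: "l2norm f = sqrt (l2sq f)"
  unfolding l2norm_def l2sq_def ..

lemma l2sq_nonneg: "l2sq f \<ge> 0"
  unfolding l2sq_def by (simp add: infsum_nonneg)

lemma l2norm_nonneg: "l2norm f \<ge> 0"
  by (simp add: l2norm_eq_sqrt_l2sq l2sq_nonneg)

lemma l2norm_power2: "(l2norm f)\<^sup>2 = l2sq f"
  by (simp add: l2norm_eq_sqrt_l2sq l2sq_nonneg)

lemma l2_zero [simp]: "(\<lambda>_. 0) \<in> l2"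
  unfolding l2_def by simp

lemma l2norm_zero [simp]: "l2norm (\<lambda>_. 0) = 0"
  unfolding l2norm_def by simp

lemma l2norm_uminus: "l2norm (\<lambda>x. - f x) = l2norm f"
  unfolding l2norm_def by simp

lemma sum_le_l2sq: "f \<in> l2 \<Longrightarrow> finite F \<Longrightarrow> (\<Sum>g\<in>F. (cmod (f g))\<^sup>2) \<le> l2sq f"
  unfolding l2_def l2sq_def by (intro finite_sum_le_infsum) auto

lemma l2I_sum_bound:
  assumes "\<And>F. finite F \<Longrightarrow> (\<Sum>g\<in>F. (cmod (f g))\<^sup>2) \<le> B"
  shows "f \<in> l2" and "l2sq f \<le> B"
proof -
  have sum: "(\<lambda>g. (cmod (f g))\<^sup>2) summable_on UNIV"
    by (rule nonneg_bdd_above_summable_on) (use assms in \<open>auto simp: bdd_above_def\<close>)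
  then show "f \<in> l2" unfolding l2_def by simp
  show "l2sq f \<le> B" unfolding l2sq_def by (rule infsum_le_finite_sums[OF sum]) (use assms in auto)
qed

lemma L2_set_le_l2norm: "f \<in> l2 \<Longrightarrow> finite F \<Longrightarrow> L2_set (\<lambda>g. cmod (f g)) F \<le> l2norm f"
  unfolding L2_set_def l2norm_eq_sqrt_l2sq using sum_le_l2sq by simp

lemma l2I_L2_set_bound:
  assumes "\<And>F. finite F \<Longrightarrow> L2_set (\<lambda>g. cmod (f g)) F \<le> B"
  shows "f \<in> l2" and "l2norm f \<le> B"
proof -
  have "0 \<le> B" using assms[of "{}"] by simp
  have "(\<Sum>g\<in>F. (cmod (f g))\<^sup>2) \<le> B\<^sup>2" if "finite F" for F
    using assms[OF that] unfolding L2_set_def by (rule sqrt_le_D)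
  from l2I_sum_bound[OF this] show "f \<in> l2" "l2norm f \<le> B"
    using \<open>0 \<le> B\<close> by (auto simp: l2norm_eq_sqrt_l2sq intro: real_le_lsqrt)
qed

lemma l2_dominated:
  assumes "f \<in> l2" and "\<And>g. cmod (h g) \<le> c * cmod (f g)" and "c \<ge> 0"
  shows "h \<in> l2" and "l2norm h \<le> c * l2norm f"
proof -
  have "L2_set (\<lambda>g. cmod (h g)) F \<le> c * l2norm f" if "finite F" for F
  proof -
    have "L2_set (\<lambda>g. cmod (h g)) F \<le> L2_set (\<lambda>g. c * cmod (f g)) F"
      by (rule L2_set_mono) (use assms in auto)
    also have "\<dots> = c * L2_set (\<lambda>g. cmod (f g)) F"
      using assms(3) by (simp add: L2_set_right_distrib)
    also have "\<dots> \<le> c * l2norm f"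
      using L2_set_le_l2norm[OF assms(1) that] assms(3) by (simp add: mult_left_mono)
    finally show ?thesis .
  qed
  then show "h \<in> l2" "l2norm h \<le> c * l2norm f"
    using l2I_L2_set_bound[of h "c * l2norm f"] by auto
qed

lemma l2_add:
  assumes "f \<in> l2" and "h \<in> l2"
  shows "(\<lambda>x. f x + h x) \<in> l2" and "l2norm (\<lambda>x. f x + h x) \<le> l2norm f + l2norm h"
proof -
  have "L2_set (\<lambda>g. cmod (f g + h g)) F \<le> l2norm f + l2norm h" if "finite F" for F
  proof -
    have "L2_set (\<lambda>g. cmod (f g + h g)) F \<le> L2_set (\<lambda>g. cmod (f g) + cmod (h g)) F"
      by (rule L2_set_mono) (auto intro: norm_triangle_ineq)
    also have "\<dots> \<le> L2_set (\<lambda>g. cmod (f g)) F + L2_set (\<lambda>g. cmod (h g)) F"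
      by (rule L2_set_triangle_ineq)
    also have "\<dots> \<le> l2norm f + l2norm h"
      using L2_set_le_l2norm[OF assms(1) that] L2_set_le_l2norm[OF assms(2) that] by simp
    finally show ?thesis .
  qed
  then show "(\<lambda>x. f x + h x) \<in> l2" "l2norm (\<lambda>x. f x + h x) \<le> l2norm f + l2norm h"
    using l2I_L2_set_bound[of "\<lambda>x. f x + h x" "l2norm f + l2norm h"] by auto
qed

lemma l2_scale: "f \<in> l2 \<Longrightarrow> (\<lambda>x. c * f x) \<in> l2"
  using l2_dominated(1)[of f "\<lambda>x. c * f x" "cmod c"] by (simp add: norm_mult)

lemma l2_diff: "f \<in> l2 \<Longrightarrow> h \<in> l2 \<Longrightarrow> (\<lambda>x. f x - h x) \<in> l2"
  using l2_add(1)[OF _ l2_scale[of h "-1"], of f] by simp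

lemma l2_linear: "f \<in> l2 \<Longrightarrow> h \<in> l2 \<Longrightarrow> (\<lambda>x. f x + c * h x) \<in> l2"
  by (simp add: l2_add(1) l2_scale)

lemma norm_le_l2norm: "f \<in> l2 \<Longrightarrow> cmod (f g) \<le> l2norm f"
  using L2_set_le_l2norm[of f "{g}"] by (simp add: L2_set_def)

lemma l2_restr: "f \<in> l2 \<Longrightarrow> restr A f \<in> l2"
  and l2norm_restr_le: "f \<in> l2 \<Longrightarrow> l2norm (restr A f) \<le> l2norm f"
  using l2_dominated[of f "restr A f" 1] by (auto simp: restr_def)

lemma restr_linear: "restr A (\<lambda>x. f x + c * h x) = (\<lambda>x. restr A f x + c * restr A h x)"
  by (auto simp: restr_def)

lemma l2sq_restr: "l2sq (restr A f) = (\<Sum>\<^sub>\<infinity>g\<in>A. (cmod (f g))\<^sup>2)"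
  unfolding l2sq_def restr_def by (rule infsum_cong_neutral) auto

lemma sum_l2sq_restr_le:
  assumes f: "f \<in> l2" and "finite I"
    and disj: "\<And>i j. i \<in> I \<Longrightarrow> j \<in> I \<Longrightarrow> i \<noteq> j \<Longrightarrow> A i \<inter> A j = {}"
  shows "(\<Sum>i\<in>I. l2sq (restr (A i) f)) \<le> l2sq f"
proof -
  define p where "p = (\<lambda>g. (cmod (f g))\<^sup>2)"
  have sum: "p summable_on UNIV" using f unfolding l2_def p_def by simp
  then have sum_on: "p summable_on B" for B using summable_on_subset by blast
  have "(\<Sum>i\<in>I. l2sq (restr (A i) f)) = (\<Sum>i\<in>I. infsum p (A i))"
    by (simp add: l2sq_restr p_def)
  also have "\<dots> = infsum p (\<Union>i\<in>I. A i)"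
    by (rule sum_infsum[OF \<open>finite I\<close>]) (use sum_on disj in auto)
  also have "\<dots> \<le> infsum p UNIV"
    by (rule infsum_mono_neutral) (use sum_on in \<open>auto simp: p_def\<close>)
  also have "\<dots> = l2sq f" by (simp add: l2sq_def p_def)
  finally show ?thesis .
qed

lemma l2_reindex:
  assumes "bij p"
  shows "(\<lambda>k. f (p k)) \<in> l2 \<longleftrightarrow> f \<in> l2" and "l2norm (\<lambda>k. f (p k)) = l2norm f"
proof -
  have p: "bij_betw p UNIV UNIV" using assms by (simp add: bij_def bij_betw_def)
  show "(\<lambda>k. f (p k)) \<in> l2 \<longleftrightarrow> f \<in> l2"
    unfolding l2_def using summable_on_reindex_bij_betw[OF p, of "\<lambda>g. (cmod (f g))\<^sup>2"] by simp
  show "l2norm (\<lambda>k. f (p k)) = l2norm f"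
    unfolding l2norm_def using infsum_reindex_bij_betw[OF p, of "\<lambda>g. (cmod (f g))\<^sup>2"] by simp
qed

lemma l2_finite_support:
  assumes "finite S" and "\<And>x. x \<notin> S \<Longrightarrow> f x = 0"
  shows "f \<in> l2"
proof -
  have "(\<lambda>g. (cmod (f g))\<^sup>2) summable_on S" using assms(1) by simp
  then have "(\<lambda>g. (cmod (f g))\<^sup>2) summable_on UNIV"
    by (rule summable_on_cong_neutral[THEN iffD1, rotated -1]) (use assms in auto)
  then show ?thesis by (simp add: l2_def)
qed

lemma delta_l2 [simp]: "delta j \<in> l2"
  by (rule l2_finite_support[of "{j}"]) (auto simp: delta_def)

lemma l2norm_delta [simp]: "l2norm (delta j) = 1"
proof -
  have "delta j = restr {j} (delta j)" by (auto simp: restr_def delta_def)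
  then have "l2sq (delta j) = (\<Sum>\<^sub>\<infinity>g\<in>{j}. (cmod (delta j g))\<^sup>2)" by (metis l2sq_restr)
  then show ?thesis by (simp add: l2norm_eq_sqrt_l2sq delta_def)
qed

lemma l2_tail:
  assumes "f \<in> l2" and "e > 0"
  obtains X where "finite X" and "\<And>Y. finite Y \<Longrightarrow> X \<subseteq> Y \<Longrightarrow> l2norm (restr (- Y) f) < e"
proof -
  define p where "p = (\<lambda>g. (cmod (f g))\<^sup>2)"
  have sum: "p summable_on UNIV" using assms(1) unfolding l2_def p_def by simp
  then have "(sum p \<longlongrightarrow> l2sq f) (finite_subsets_at_top UNIV)"
    unfolding l2sq_def p_def[symmetric] by (simp add: has_sum_def[symmetric])
  moreover have "e\<^sup>2 > 0" using assms(2) by simp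
  ultimately have "eventually (\<lambda>Y. dist (sum p Y) (l2sq f) < e\<^sup>2) (finite_subsets_at_top UNIV)"
    by (rule tendstoD)
  then obtain X where "finite X" and X: "\<And>Y. finite Y \<Longrightarrow> X \<subseteq> Y \<Longrightarrow> dist (sum p Y) (l2sq f) < e\<^sup>2"
    unfolding eventually_finite_subsets_at_top by auto
  have "l2norm (restr (- Y) f) < e" if "finite Y" "X \<subseteq> Y" for Y
  proof -
    have "l2sq (restr (- Y) f) = infsum p UNIV - infsum p Y"
      unfolding l2sq_restr p_def[symmetric] Compl_eq_Diff_UNIV
      by (rule infsum_Diff) (use sum that in auto)
    also have "\<dots> = l2sq f - sum p Y" using that(1) by (simp add: l2sq_def p_def)
    finally have "l2sq (restr (- Y) f) < e\<^sup>2" using X[OF that] by (simp add: dist_real_def)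
    then show ?thesis
      using assms(2) by (simp add: l2norm_eq_sqrt_l2sq real_sqrt_less_iff real_less_lsqrt)
  qed
  with \<open>finite X\<close> show ?thesis using that by blast
qed

lemma bopI:
  assumes "\<And>f. f \<in> l2 \<Longrightarrow> T f \<in> l2"
    and "\<And>f h c. f \<in> l2 \<Longrightarrow> h \<in> l2 \<Longrightarrow> T (\<lambda>x. f x + c * h x) = (\<lambda>x. T f x + c * T h x)"
    and "\<And>f. f \<in> l2 \<Longrightarrow> l2norm (T f) \<le> C * l2norm f"
    and "\<And>f. f \<notin> l2 \<Longrightarrow> T f = (\<lambda>_. 0)"
  shows "T \<in> bop"
  unfolding bop_def using assms by blast

lemma bop_l2: "T \<in> bop \<Longrightarrow> f \<in> l2 \<Longrightarrow> T f \<in> l2"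
  unfolding bop_def by blast

lemma bop_linear:
  "T \<in> bop \<Longrightarrow> f \<in> l2 \<Longrightarrow> h \<in> l2 \<Longrightarrow> T (\<lambda>x. f x + c * h x) = (\<lambda>x. T f x + c * T h x)"
  unfolding bop_def by blast

lemma bop_outside: "T \<in> bop \<Longrightarrow> f \<notin> l2 \<Longrightarrow> T f = (\<lambda>_. 0)"
  unfolding bop_def by blast

lemma bop_bound:
  assumes "T \<in> bop"
  obtains C where "C > 0" and "\<And>f. f \<in> l2 \<Longrightarrow> l2norm (T f) \<le> C * l2norm f"
proof -
  obtain C where C: "\<And>f. f \<in> l2 \<Longrightarrow> l2norm (T f) \<le> C * l2norm f"
    using assms unfolding bop_def by blast
  have "l2norm (T f) \<le> (max C 0 + 1) * l2norm f" if "f \<in> l2" for f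
    using C[OF that] mult_right_mono[of C "max C 0 + 1" "l2norm f"] l2norm_nonneg[of f] by linarith
  then show ?thesis using that[of "max C 0 + 1"] by simp
qed

lemma bop_zero: "T \<in> bop \<Longrightarrow> T (\<lambda>_. 0) = (\<lambda>_. 0)"
  using bop_linear[of T "\<lambda>_. 0" "\<lambda>_. 0" 1] by (simp add: fun_eq_iff)

lemma bop_add: "T \<in> bop \<Longrightarrow> f \<in> l2 \<Longrightarrow> h \<in> l2 \<Longrightarrow> T (\<lambda>x. f x + h x) = (\<lambda>x. T f x + T h x)"
  using bop_linear[of T f h 1] by simp

lemma bop_comp:
  assumes S: "S \<in> bop" and T: "T \<in> bop"
  shows "S \<circ> T \<in> bop"
proof -
  obtain C1 where C1: "C1 > 0" "\<And>f. f \<in> l2 \<Longrightarrow> l2norm (S f) \<le> C1 * l2norm f"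
    using bop_bound[OF S] by blast
  obtain C2 where C2: "\<And>f. f \<in> l2 \<Longrightarrow> l2norm (T f) \<le> C2 * l2norm f"
    using bop_bound[OF T] by blast
  show ?thesis
  proof (rule bopI)
    fix f assume f: "f \<in> l2"
    have "l2norm (S (T f)) \<le> C1 * l2norm (T f)" using C1(2) bop_l2[OF T f] by blast
    also have "\<dots> \<le> C1 * (C2 * l2norm f)" using C2[OF f] C1(1) by simp
    finally show "l2norm ((S \<circ> T) f) \<le> (C1 * C2) * l2norm f" by (simp add: mult.assoc)
  qed (use S T bop_l2 bop_linear bop_outside bop_zero in auto)
qed

lemma l2sq_bop_le:
  assumes "\<And>f. f \<in> l2 \<Longrightarrow> l2norm (T f) \<le> C * l2norm f" and "C > 0" and "f \<in> l2"
  shows "l2sq (T f) \<le> C\<^sup>2 * l2sq f"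
proof -
  have "(l2norm (T f))\<^sup>2 \<le> (C * l2norm f)\<^sup>2"
    by (rule power_mono[OF assms(1)[OF assms(3)] l2norm_nonneg])
  then show ?thesis by (simp add: l2norm_power2 power_mult_distrib)
qed

lemma bop_restr_eq_sum_delta:
  assumes T: "T \<in> bop" and "finite Y"
  shows "T (restr Y f) = (\<lambda>h. \<Sum>j\<in>Y. f j * T (delta j) h)"
  using \<open>finite Y\<close>
proof (induction Y rule: finite_induct)
  case empty
  then show ?case using bop_zero[OF T] by (simp add: restr_def)
next
  case (insert a Y)
  have "restr (insert a Y) f = (\<lambda>x. restr Y f x + f a * delta a x)"
    using insert(2) by (auto simp: restr_def delta_def fun_eq_iff)
  then have "T (restr (insert a Y) f) = (\<lambda>x. T (restr Y f) x + f a * T (delta a) x)"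
    by (simp add: bop_linear[OF T] l2_finite_support[OF insert(1)] restr_def)
  then show ?case using insert by (simp add: add.commute)
qed

lemma bop_has_sum_delta:
  assumes T: "T \<in> bop" and f: "f \<in> l2"
  shows "((\<lambda>j. f j * T (delta j) h) has_sum T f h) UNIV"
  unfolding has_sum_def
proof (rule tendstoI)
  fix e :: real assume "e > 0"
  obtain C where "C > 0" and C: "\<And>f. f \<in> l2 \<Longrightarrow> l2norm (T f) \<le> C * l2norm f"
    using bop_bound[OF T] by blast
  obtain X where "finite X" and X: "\<And>Y. finite Y \<Longrightarrow> X \<subseteq> Y \<Longrightarrow> l2norm (restr (- Y) f) < e / C"
    using l2_tail[OF f] \<open>e > 0\<close> \<open>C > 0\<close> by (metis divide_pos_pos)
  have "dist (\<Sum>j\<in>Y. f j * T (delta j) h) (T f h) < e" if Y: "finite Y" "X \<subseteq> Y" for Y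
  proof -
    have split: "f = (\<lambda>x. restr Y f x + restr (- Y) f x)" by (auto simp: restr_def)
    have "T f = (\<lambda>x. T (restr Y f) x + T (restr (- Y) f) x)"
      by (subst split) (rule bop_add[OF T l2_restr[OF f] l2_restr[OF f]])
    then have "dist (\<Sum>j\<in>Y. f j * T (delta j) h) (T f h) = cmod (T (restr (- Y) f) h)"
      by (simp add: bop_restr_eq_sum_delta[OF T Y(1)] dist_norm)
    also have "\<dots> \<le> C * l2norm (restr (- Y) f)"
      using norm_le_l2norm[OF bop_l2[OF T l2_restr[OF f]]] C[OF l2_restr[OF f]] by (rule order_trans)
    also have "\<dots> < C * (e / C)" using X[OF Y] \<open>C > 0\<close> by (rule mult_strict_left_mono)
    finally show ?thesis using \<open>C > 0\<close> by simp
  qed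
  then show "eventually (\<lambda>Y. dist (\<Sum>j\<in>Y. f j * T (delta j) h) (T f h) < e) (finite_subsets_at_top UNIV)"
    unfolding eventually_finite_subsets_at_top using \<open>finite X\<close> by blast
qed

lemma bop_eqI_delta:
  assumes "S \<in> bop" and "T \<in> bop" and "\<And>j. S (delta j) = T (delta j)"
  shows "S = T"
proof
  fix f
  show "S f = T f"
  proof (cases "f \<in> l2")
    case True
    show ?thesis
    proof
      fix h
      have "((\<lambda>j. f j * S (delta j) h) has_sum T f h) UNIV"
        using bop_has_sum_delta[OF assms(2) True, of h] assms(3) by simp
      with bop_has_sum_delta[OF assms(1) True] show "S f h = T f h" by (rule has_sum_unique)
    qed
  next
    case False
    then show ?thesis using bop_outside assms(1,2) by simp
  qed
qed

definition perm_op :: "(raag \<Rightarrow> raag) \<Rightarrow> op" where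
  "perm_op p f = (if f \<in> l2 then (\<lambda>k. f (p k)) else (\<lambda>_. 0))"

lemma perm_op_bop: "bij p \<Longrightarrow> perm_op p \<in> bop"
  by (rule bopI[where C = 1]) (auto simp: perm_op_def l2_reindex l2_linear)

lemma lambda_op_eq_perm_op: "lambda_op g = perm_op ((+) (- g))"
  by (rule ext) (simp add: lambda_op_def perm_op_def plus_raag_def uminus_raag_def)

lemma lambda_op_apply: "f \<in> l2 \<Longrightarrow> lambda_op g f = (\<lambda>h. f (- g + h))"
  by (simp add: lambda_op_eq_perm_op perm_op_def)

lemma lambda_op_bop: "lambda_op g \<in> bop"
  by (simp add: lambda_op_eq_perm_op perm_op_bop bij_plus)

lemma lambda_op_add: "lambda_op (a + b) f = lambda_op a (lambda_op b f)"
proof (cases "f \<in> l2")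
  case True
  then show ?thesis
    using bop_l2[OF lambda_op_bop True] by (simp del: add_uminus_conv_diff add: lambda_op_apply minus_add add.assoc)
next
  case False
  then show ?thesis by (simp add: lambda_op_eq_perm_op perm_op_def)
qed

lemma lambda_op_0: "f \<in> l2 \<Longrightarrow> lambda_op 0 f = f"
  by (simp add: lambda_op_apply)

definition rho :: "raag \<Rightarrow> op" where "rho g = perm_op (\<lambda>h. h + g)"

lemma rho_bop: "rho g \<in> bop"
  by (simp add: rho_def perm_op_bop bij_plus_right)

lemma rho_apply: "f \<in> l2 \<Longrightarrow> rho g f = (\<lambda>h. f (h + g))"
  by (simp add: rho_def perm_op_def)

lemma rho_lambda_op_commute: "f \<in> l2 \<Longrightarrow> rho g (lambda_op k f) = lambda_op k (rho g f)"
  using bop_l2[OF lambda_op_bop] bop_l2[OF rho_bop] by (simp add: rho_apply lambda_op_apply add.assoc)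

lemma commutantI:
  "T \<in> bop \<Longrightarrow> (\<And>A f. A \<in> S \<Longrightarrow> f \<in> l2 \<Longrightarrow> T (A f) = A (T f)) \<Longrightarrow> T \<in> commutant S"
  unfolding commutant_def by blast

lemma commutantD: "T \<in> commutant S \<Longrightarrow> A \<in> S \<Longrightarrow> f \<in> l2 \<Longrightarrow> T (A f) = A (T f)"
  unfolding commutant_def by blast

lemma commutant_bop: "T \<in> commutant S \<Longrightarrow> T \<in> bop"
  unfolding commutant_def by blast

lemma rho_in_commutant: "S \<subseteq> range lambda_op \<Longrightarrow> rho g \<in> commutant S"
  by (rule commutantI[OF rho_bop]) (auto simp: rho_lambda_op_commute)

lemma delta_eq_rho: "delta j = rho (- j) (delta 0)"
  unfolding rho_apply[OF delta_l2] by (simp add: delta_def fun_eq_iff)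

lemma delta_add_eq_lambda_op: "delta (k + g) = lambda_op k (delta g)"
  unfolding lambda_op_apply[OF delta_l2] by (auto simp: delta_def fun_eq_iff)

lemma bicommutant_delta:
  assumes x: "x \<in> commutant (commutant S)" and S: "S \<subseteq> range lambda_op"
  shows "x (delta j) h = x (delta 0) (h + - j)"
proof -
  have "x (delta j) = rho (- j) (x (delta 0))"
    unfolding delta_eq_rho[of j] by (rule commutantD[OF x rho_in_commutant[OF S] delta_l2])
  then show ?thesis by (simp add: rho_apply bop_l2[OF commutant_bop[OF x]])
qed

lemma LG_bop: "x \<in> LG \<Longrightarrow> x \<in> bop"
  unfolding LG_def by (rule commutant_bop)

lemma vN_v2_bop: "y \<in> vN_v2 \<Longrightarrow> y \<in> bop"
  unfolding vN_v2_def by (rule commutant_bop)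

lemma LG_delta:
  assumes "x \<in> LG"
  shows "x (delta j) h = x (delta 0) (h + - j)"
  using bicommutant_delta[OF assms[unfolded LG_def] order_refl] .

lemma vN_v2_delta:
  assumes "y \<in> vN_v2"
  shows "y (delta j) h = y (delta 0) (h + - j)"
  using bicommutant_delta[OF assms[unfolded vN_v2_def]] by simp

lemma delta_e_eq: "delta_e = delta 0"
  unfolding delta_e_def delta_def zero_raag_def ..

lemma tau_eq: "tau x = x (delta 0) 0"
proof -
  have "tau x = (\<Sum>\<^sub>\<infinity>g\<in>{0}. cnj (delta 0 g) * x (delta 0) g)"
    unfolding tau_def l2inner_def delta_e_eq by (rule infsum_cong_neutral) (auto simp: delta_def)
  then show ?thesis by (simp add: delta_def)
qed

definition restr_op :: "raag set \<Rightarrow> op" where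
  "restr_op A f = (if f \<in> l2 then restr A f else (\<lambda>_. 0))"

lemma restr_op_bop: "restr_op A \<in> bop"
  by (rule bopI[where C = 1]) (auto simp: restr_op_def l2_restr l2norm_restr_le l2_linear restr_linear)

lemma restr_op_v2_subgroup_in_commutant: "restr_op v2_subgroup \<in> commutant {lambda_op v2}"
proof (rule commutantI[OF restr_op_bop])
  fix A f assume "A \<in> {lambda_op v2}" and f: "f \<in> l2"
  have "- v2 \<in> v2_subgroup" by (simp add: v2_in_v2_subgroup)
  then show "restr_op v2_subgroup (A f) = A (restr_op v2_subgroup f)"
    using \<open>A \<in> {lambda_op v2}\<close> f bop_l2[OF lambda_op_bop f] l2_restr[OF f]
    by (auto simp: restr_op_def restr_def lambda_op_apply v2_subgroup_add_left_iff)
qed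

lemma vN_v2_delta_0_support:
  assumes b: "b \<in> vN_v2" and "h \<notin> v2_subgroup"
  shows "b (delta 0) h = 0"
proof -
  have "restr_op v2_subgroup (delta 0) = delta 0"
    unfolding restr_op_def using delta_l2[of 0] by (auto simp: restr_def delta_def)
  then have "b (delta 0) = restr_op v2_subgroup (b (delta 0))"
    using commutantD[OF b[unfolded vN_v2_def v2_def[symmetric]] restr_op_v2_subgroup_in_commutant
        delta_l2[of 0]]
    by metis
  then show ?thesis using \<open>h \<notin> v2_subgroup\<close> by (simp add: restr_op_def restr_def fun_eq_iff)
qed

lemma commutant_v2_commute_v2_pow:
  assumes T: "T \<in> commutant {lambda_op v2}"
  shows "f \<in> l2 \<Longrightarrow> T (lambda_op (v2_pow n) f) = lambda_op (v2_pow n) (T f)"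
proof (induction n arbitrary: f rule: int_induct[where k = 0])
  case base
  then show ?case using bop_l2[OF commutant_bop[OF T]] by (simp add: lambda_op_0)
next
  case (step1 i)
  then show ?case
    using commutantD[OF T, of "lambda_op v2"] bop_l2[OF lambda_op_bop]
    by (simp add: v2_pow_succ lambda_op_add)
next
  case (step2 i)
  have inv: "T (lambda_op (- v2) g) = lambda_op (- v2) (T g)" if g: "g \<in> l2" for g
  proof -
    have "lambda_op v2 (lambda_op (- v2) g) = g"
      using g by (simp flip: lambda_op_add add: lambda_op_0)
    then have "T g = lambda_op v2 (T (lambda_op (- v2) g))"
      using commutantD[OF T singletonI bop_l2[OF lambda_op_bop g]] by metis
    then show ?thesis using bop_l2[OF commutant_bop[OF T] bop_l2[OF lambda_op_bop g]]
      by (simp flip: lambda_op_add add: lambda_op_0)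
  qed
  then show ?case
    using step2 bop_l2[OF lambda_op_bop] by (simp add: v2_pow_pred lambda_op_add)
qed

lemma lambda_op_v2_pow_in_vN_v2: "lambda_op (v2_pow n) \<in> vN_v2"
  unfolding vN_v2_def v2_def[symmetric]
  by (rule commutantI[OF lambda_op_bop]) (simp add: commutant_v2_commute_v2_pow)

definition v2_coset :: "raag \<Rightarrow> raag set" where
  "v2_coset h = {k. k + - h \<in> v2_subgroup}"

lemma v2_coset_0: "v2_coset 0 = v2_subgroup"
  by (simp add: v2_coset_def)

lemma v2_coset_eq:
  assumes "k \<in> v2_coset h"
  shows "v2_coset k = v2_coset h"
proof -
  have kh: "k + - h \<in> v2_subgroup" using assms by (simp add: v2_coset_def)
  have "z + - k \<in> v2_subgroup \<longleftrightarrow> z + - h \<in> v2_subgroup" for z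
  proof -
    have "z + - h = (z + - k) + (k + - h)" by (simp only: add.assoc minus_add_cancel)
    then show ?thesis using v2_subgroup_add_right_iff[OF kh, of "z + - k"] by metis
  qed
  then show ?thesis by (auto simp: v2_coset_def)
qed

lemma v2_coset_disjoint: "v2_coset a \<noteq> v2_coset b \<Longrightarrow> v2_coset a \<inter> v2_coset b = {}"
  using v2_coset_eq by blast

section \<open>The conditional expectation onto the von Neumann algebra of v2\<close>

text \<open>For x in L(G), the conditional expectation is the sum of x^(k) lambda(k) over k in H; in the
  standard basis it keeps the matrix entries of x between points of the same right coset of H
  and kills all others.\<close>

definition cexp_v2 :: "op \<Rightarrow> op" where
  "cexp_v2 x f = (if f \<in> l2 then (\<lambda>h. x (restr (v2_coset h) f) h) else (\<lambda>_. 0))"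

lemma cexp_v2_bound:
  assumes x: "x \<in> bop" and C: "C > 0" "\<And>f. f \<in> l2 \<Longrightarrow> l2norm (x f) \<le> C * l2norm f"
    and f: "f \<in> l2"
  shows "cexp_v2 x f \<in> l2" and "l2norm (cexp_v2 x f) \<le> C * l2norm f"
proof -
  have "(\<Sum>h\<in>F. (cmod (cexp_v2 x f h))\<^sup>2) \<le> C\<^sup>2 * l2sq f" if F: "finite F" for F
  proof -
    have "(\<Sum>h\<in>F. (cmod (cexp_v2 x f h))\<^sup>2)
        = (\<Sum>A\<in>v2_coset ` F. \<Sum>h\<in>{h\<in>F. v2_coset h = A}. (cmod (cexp_v2 x f h))\<^sup>2)"
      by (rule sum.group[symmetric]) (use F in auto)
    also have "\<dots> = (\<Sum>A\<in>v2_coset ` F. \<Sum>h\<in>{h\<in>F. v2_coset h = A}. (cmod (x (restr A f) h))\<^sup>2)"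
      by (intro sum.cong refl) (auto simp: cexp_v2_def f)
    also have "\<dots> \<le> (\<Sum>A\<in>v2_coset ` F. C\<^sup>2 * l2sq (restr A f))"
    proof (rule sum_mono)
      fix A
      have "(\<Sum>h\<in>{h\<in>F. v2_coset h = A}. (cmod (x (restr A f) h))\<^sup>2) \<le> l2sq (x (restr A f))"
        using F by (intro sum_le_l2sq bop_l2[OF x l2_restr[OF f]]) auto
      also have "\<dots> \<le> C\<^sup>2 * l2sq (restr A f)" by (rule l2sq_bop_le[OF C(2) C(1) l2_restr[OF f]])
      finally show "(\<Sum>h\<in>{h\<in>F. v2_coset h = A}. (cmod (x (restr A f) h))\<^sup>2) \<le> C\<^sup>2 * l2sq (restr A f)" .
    qed
    also have "\<dots> = C\<^sup>2 * (\<Sum>A\<in>v2_coset ` F. l2sq (restr A f))" by (simp add: sum_distrib_left)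
    also have "\<dots> \<le> C\<^sup>2 * l2sq f"
      by (rule mult_left_mono[OF sum_l2sq_restr_le[OF f, where A = "\<lambda>A. A"]])
        (use F v2_coset_disjoint in auto)
    finally show ?thesis .
  qed
  from l2I_sum_bound[OF this]
  have "cexp_v2 x f \<in> l2" and "sqrt (l2sq (cexp_v2 x f)) \<le> sqrt (C\<^sup>2 * l2sq f)" by auto
  then show "cexp_v2 x f \<in> l2" and "l2norm (cexp_v2 x f) \<le> C * l2norm f"
    using C(1) by (simp_all add: l2norm_eq_sqrt_l2sq real_sqrt_mult)
qed

lemma cexp_v2_bop:
  assumes x: "x \<in> bop"
  shows "cexp_v2 x \<in> bop"
proof -
  obtain C where C: "C > 0" "\<And>f. f \<in> l2 \<Longrightarrow> l2norm (x f) \<le> C * l2norm f"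
    using bop_bound[OF x] by blast
  show ?thesis
  proof (rule bopI[where C = C])
    fix f h c assume f: "f \<in> l2" and h: "h \<in> l2"
    show "cexp_v2 x (\<lambda>z. f z + c * h z) = (\<lambda>z. cexp_v2 x f z + c * cexp_v2 x h z)"
      using f h l2_linear[OF f h]
      by (simp add: cexp_v2_def restr_linear bop_linear[OF x l2_restr[OF f] l2_restr[OF h]])
  qed (use cexp_v2_bound[OF x C] in \<open>auto simp: cexp_v2_def\<close>)
qed

lemma cexp_v2_delta:
  assumes "x \<in> bop"
  shows "cexp_v2 x (delta g) j = (if g \<in> v2_coset j then x (delta g) j else 0)"
proof -
  have "restr (v2_coset j) (delta g) = (if g \<in> v2_coset j then delta g else (\<lambda>_. 0))"
    by (auto simp: restr_def delta_def)
  then show ?thesis by (simp add: cexp_v2_def bop_zero[OF assms])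
qed

lemma cexp_v2_tau:
  assumes x: "x \<in> bop" and b: "b \<in> vN_v2"
  shows "tau (cexp_v2 x \<circ> b) = tau (x \<circ> b)"
proof -
  have "restr (v2_coset 0) (b (delta 0)) = b (delta 0)"
    using vN_v2_delta_0_support[OF b] by (auto simp: restr_def v2_coset_0)
  then show ?thesis using bop_l2[OF vN_v2_bop[OF b] delta_l2] by (simp add: tau_eq cexp_v2_def)
qed

lemma cexp_v2_delta_shift:
  assumes x: "x \<in> LG"
  shows "cexp_v2 x (delta g) (k + g) = (if k \<in> v2_subgroup then x (delta 0) k else 0)"
proof -
  have "g + - (k + g) = - k" by (simp only: minus_add add_minus_cancel)
  moreover have "k + g + - g = k" by (simp only: add.assoc add.right_inverse add_0_right)
  ultimately show ?thesis
    unfolding cexp_v2_delta[OF LG_bop[OF x]] v2_coset_def mem_Collect_eq LG_delta[OF x, of g]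
    by (simp only: uminus_in_v2_subgroup_iff)
qed

lemma commutant_v2_delta_shift:
  assumes T: "T \<in> commutant {lambda_op v2}" and "k \<in> v2_subgroup"
  shows "T (delta (k + g)) h = T (delta g) (- k + h)"
proof -
  obtain n where "k = v2_pow n" using assms(2) by (auto simp: v2_subgroup_def)
  then have "T (delta (k + g)) = lambda_op k (T (delta g))"
    by (simp add: delta_add_eq_lambda_op commutant_v2_commute_v2_pow[OF T delta_l2])
  then show ?thesis by (simp add: lambda_op_apply bop_l2[OF commutant_bop[OF T] delta_l2])
qed

text \<open>Reindexing the matrix expansions of T and of x by j = k + g and j = - k + h writes both
  sides as the sum over k in H of (x delta_0)(k) (T delta_g)(- k + h).\<close>

lemma cexp_v2_commute_delta:
  assumes x: "x \<in> LG" and T: "T \<in> commutant {lambda_op v2}"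
  shows "T (cexp_v2 x (delta g)) h = cexp_v2 x (T (delta g)) h"
proof -
  define t where "t = T (delta g)"
  have t: "t \<in> l2" unfolding t_def by (rule bop_l2[OF commutant_bop[OF T] delta_l2])
  define F where "F k = (if k \<in> v2_subgroup then x (delta 0) k * t (- k + h) else 0)" for k
  have "(F has_sum T (cexp_v2 x (delta g)) h) UNIV"
  proof -
    have "((\<lambda>j. cexp_v2 x (delta g) j * T (delta j) h) has_sum T (cexp_v2 x (delta g)) h) UNIV"
      by (rule bop_has_sum_delta[OF commutant_bop[OF T] bop_l2[OF cexp_v2_bop[OF LG_bop[OF x]] delta_l2]])
    moreover have "cexp_v2 x (delta g) (k + g) * T (delta (k + g)) h = F k" for k
      by (simp add: F_def t_def cexp_v2_delta_shift[OF x] commutant_v2_delta_shift[OF T])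
    ultimately show ?thesis
      using has_sum_reindex_bij_betw[OF bij_plus_right[of g],
          of "\<lambda>j. cexp_v2 x (delta g) j * T (delta j) h"] by simp
  qed
  moreover have "(F has_sum cexp_v2 x t h) UNIV"
  proof -
    have "((\<lambda>j. restr (v2_coset h) t j * x (delta j) h) has_sum x (restr (v2_coset h) t) h) UNIV"
      by (rule bop_has_sum_delta[OF LG_bop[OF x] l2_restr[OF t]])
    moreover have "restr (v2_coset h) t (- k + h) * x (delta (- k + h)) h = F k" for k
    proof -
      have "(- k + h) + - h = - k" by (simp only: add.assoc add.right_inverse add_0_right)
      moreover have "h + - (- k + h) = k" by (simp only: minus_add minus_minus add_minus_cancel)
      ultimately show ?thesis
        unfolding F_def restr_def v2_coset_def mem_Collect_eq LG_delta[OF x, of "- k + h"]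
        by (simp only: uminus_in_v2_subgroup_iff) simp
    qed
    moreover have "bij (\<lambda>k::raag. - k + h)"
      using bij_comp[OF bij_uminus bij_plus_right[of h]] by (simp add: comp_def)
    ultimately show ?thesis
      using has_sum_reindex_bij_betw[of "\<lambda>k. - k + h" UNIV UNIV
          "\<lambda>j. restr (v2_coset h) t j * x (delta j) h"] t
      by (simp add: cexp_v2_def)
  qed
  ultimately show ?thesis unfolding t_def by (rule has_sum_unique)
qed

lemma cexp_v2_in_vN_v2:
  assumes x: "x \<in> LG"
  shows "cexp_v2 x \<in> vN_v2"
  unfolding vN_v2_def v2_def[symmetric]
proof (rule commutantI[OF cexp_v2_bop[OF LG_bop[OF x]]])
  fix A f assume A: "A \<in> commutant {lambda_op v2}" and "f \<in> l2"
  have "cexp_v2 x \<in> bop" and "A \<in> bop"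
    using cexp_v2_bop[OF LG_bop[OF x]] commutant_bop[OF A] .
  then have "cexp_v2 x \<circ> A = A \<circ> cexp_v2 x"
    by (intro bop_eqI_delta bop_comp) (simp_all add: fun_eq_iff cexp_v2_commute_delta[OF x A])
  then show "cexp_v2 x (A f) = A (cexp_v2 x f)" by (metis comp_apply)
qed

lemma tau_comp_lambda_op_v2_pow:
  assumes "y \<in> vN_v2"
  shows "tau (y \<circ> lambda_op (v2_pow n)) = y (delta 0) (v2_pow (- n))"
  using vN_v2_delta[OF assms, of "v2_pow n" 0] delta_add_eq_lambda_op[of "v2_pow n" 0]
  by (simp add: tau_eq v2_pow_uminus)

lemma vN_v2_eqI:
  assumes y: "y \<in> vN_v2" and z: "z \<in> vN_v2"
    and tau: "\<And>n. tau (y \<circ> lambda_op (v2_pow n)) = tau (z \<circ> lambda_op (v2_pow n))"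
  shows "y = z"
proof (rule bop_eqI_delta[OF vN_v2_bop[OF y] vN_v2_bop[OF z]])
  have "y (delta 0) h = z (delta 0) h" for h
  proof (cases "h \<in> v2_subgroup")
    case True
    then obtain m where "h = v2_pow m" by (auto simp: v2_subgroup_def)
    then show ?thesis using tau[of "- m"] by (simp add: tau_comp_lambda_op_v2_pow y z)
  next
    case False
    then show ?thesis by (simp add: vN_v2_delta_0_support y z)
  qed
  then show "y (delta j) = z (delta j)" for j
    by (simp add: fun_eq_iff vN_v2_delta[OF y, of j] vN_v2_delta[OF z, of j])
qed

lemma condexp_vN_v2_eq:
  assumes x: "x \<in> LG"
  shows "condexp vN_v2 x = cexp_v2 x"
  unfolding condexp_def
proof (rule the_equality)
  show "cexp_v2 x \<in> vN_v2 \<and> (\<forall>b\<in>vN_v2. tau (cexp_v2 x \<circ> b) = tau (x \<circ> b))"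
    using cexp_v2_in_vN_v2[OF x] cexp_v2_tau[OF LG_bop[OF x]] by blast
  fix y assume y: "y \<in> vN_v2 \<and> (\<forall>b\<in>vN_v2. tau (y \<circ> b) = tau (x \<circ> b))"
  then show "y = cexp_v2 x"
    using cexp_v2_in_vN_v2[OF x] cexp_v2_tau[OF LG_bop[OF x]] lambda_op_v2_pow_in_vN_v2
    by (intro vN_v2_eqI) auto
qed

lemma condexp_vN_v2_delta_e:
  assumes "x \<in> LG"
  shows "condexp vN_v2 x delta_e = restr v2_subgroup (x delta_e)"
  using cexp_v2_delta[OF LG_bop[OF assms], of 0]
  by (simp add: condexp_vN_v2_eq[OF assms] delta_e_eq restr_def v2_coset_def fun_eq_iff)

section \<open>Vectors almost invariant under conjugation by u1\<close>

lemma l2norm_funpow_diff_le: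
  assumes p: "bij p" and \<xi>: "\<xi> \<in> l2"
  shows "l2norm (\<lambda>k. \<xi> ((p ^^ m) k) - \<xi> k) \<le> real m * l2norm (\<lambda>k. \<xi> (p k) - \<xi> k)"
proof (induction m)
  case 0
  then show ?case by simp
next
  case (Suc m)
  define q where "q = p ^^ m"
  have q: "bij q" unfolding q_def by (rule bij_betw_funpow[OF p])
  have d: "(\<lambda>k. \<xi> (p k) - \<xi> k) \<in> l2"
    using l2_diff[OF l2_reindex(1)[OF p, THEN iffD2, OF \<xi>] \<xi>] .
  have m1: "(\<lambda>k. \<xi> (p (q k)) - \<xi> (q k)) \<in> l2"
    using l2_reindex(1)[OF q, of "\<lambda>k. \<xi> (p k) - \<xi> k"] d by simp
  have m2: "(\<lambda>k. \<xi> (q k) - \<xi> k) \<in> l2"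
    using l2_diff[OF l2_reindex(1)[OF q, THEN iffD2, OF \<xi>] \<xi>] .
  have "(\<lambda>k. \<xi> ((p ^^ Suc m) k) - \<xi> k) = (\<lambda>k. (\<xi> (p (q k)) - \<xi> (q k)) + (\<xi> (q k) - \<xi> k))"
    by (simp add: q_def)
  then have "l2norm (\<lambda>k. \<xi> ((p ^^ Suc m) k) - \<xi> k)
      \<le> l2norm (\<lambda>k. \<xi> (p (q k)) - \<xi> (q k)) + l2norm (\<lambda>k. \<xi> (q k) - \<xi> k)"
    by (simp only: l2_add(2)[OF m1 m2])
  also have "l2norm (\<lambda>k. \<xi> (p (q k)) - \<xi> (q k)) = l2norm (\<lambda>k. \<xi> (p k) - \<xi> k)"
    using l2_reindex(2)[OF q, of "\<lambda>k. \<xi> (p k) - \<xi> k"] by simp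
  also have "l2norm (\<lambda>k. \<xi> (q k) - \<xi> k) \<le> real m * l2norm (\<lambda>k. \<xi> (p k) - \<xi> k)"
    using Suc.IH by (simp add: q_def)
  finally show ?case by (simp add: algebra_simps)
qed

lemma l2norm_restr_le_image:
  assumes p: "bij p" and \<xi>: "\<xi> \<in> l2"
  shows "l2norm (restr S \<xi>) \<le> l2norm (restr (p ` S) \<xi>) + l2norm (\<lambda>k. \<xi> (p k) - \<xi> k)"
proof -
  have \<xi>p: "(\<lambda>k. \<xi> (p k)) \<in> l2" using l2_reindex(1)[OF p] \<xi> by simp
  have "restr S \<xi> = (\<lambda>k. restr S (\<lambda>k. \<xi> (p k)) k + restr S (\<lambda>k. \<xi> k - \<xi> (p k)) k)"
    by (auto simp: restr_def)
  then have "l2norm (restr S \<xi>)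
      \<le> l2norm (restr S (\<lambda>k. \<xi> (p k))) + l2norm (restr S (\<lambda>k. \<xi> k - \<xi> (p k)))"
    using l2_add(2)[OF l2_restr[OF \<xi>p] l2_restr[OF l2_diff[OF \<xi> \<xi>p]], of S S] by simp
  also have "restr S (\<lambda>k. \<xi> (p k)) = (\<lambda>k. restr (p ` S) \<xi> (p k))"
    using bij_is_inj[OF p] by (auto simp: restr_def fun_eq_iff inj_image_mem_iff)
  also have "l2norm (restr S (\<lambda>k. \<xi> k - \<xi> (p k))) \<le> l2norm (\<lambda>k. \<xi> (p k) - \<xi> k)"
    using l2norm_restr_le[OF l2_diff[OF \<xi> \<xi>p]] l2norm_uminus[of "\<lambda>k. \<xi> (p k) - \<xi> k"] by simp
  finally show ?thesis by (simp add: l2_reindex(2)[OF p])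
qed

lemma le_max_of_sum_power2_le:
  fixes t c B :: real and s :: "nat \<Rightarrow> real"
  assumes "N > 0" and "t \<ge> 0" and "B \<ge> 0"
    and shift: "\<And>m. m < N \<Longrightarrow> t \<le> s m + c" and sum_s: "(\<Sum>m<N. (s m)\<^sup>2) \<le> B\<^sup>2"
  shows "t \<le> max (2 * B / sqrt (real N)) (2 * c)"
proof (cases "t \<le> 2 * c")
  case False
  have "real N * (t / 2)\<^sup>2 = (\<Sum>m<N. (t / 2)\<^sup>2)" by simp
  also have "\<dots> \<le> (\<Sum>m<N. (s m)\<^sup>2)"
  proof (rule sum_mono)
    fix m assume "m \<in> {..<N}"
    then have "t \<le> s m + c" by (simp add: shift)
    with False have "t / 2 \<le> s m" by linarith
    then show "(t / 2)\<^sup>2 \<le> (s m)\<^sup>2" using \<open>t \<ge> 0\<close> by (simp add: power_mono)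
  qed
  also have "\<dots> \<le> B\<^sup>2" by (rule sum_s)
  finally have "real N * (t / 2)\<^sup>2 \<le> B\<^sup>2" .
  moreover have "(t * sqrt (real N))\<^sup>2 = 4 * (real N * (t / 2)\<^sup>2)"
    by (simp add: power_mult_distrib power_divide)
  ultimately have "(t * sqrt (real N))\<^sup>2 \<le> (2 * B)\<^sup>2" by simp
  moreover have "0 \<le> 2 * B" using \<open>B \<ge> 0\<close> by simp
  ultimately have "t * sqrt (real N) \<le> 2 * B" by (rule power2_le_imp_le)
  then have "t \<le> 2 * B / sqrt (real N)" using \<open>N > 0\<close> by (simp add: pos_le_divide_eq)
  then show ?thesis by simp
qed simp

text \<open>The N sets u1^m (H - {0}) u1^-m, m < N, are disjoint, and on each of them xi has norm
  at least its norm on H - {0} minus N times the defect.\<close>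

lemma l2norm_restr_v2_nonzero_le:
  assumes \<xi>: "\<xi> \<in> l2" and B: "l2norm \<xi> \<le> B" and "N > 0"
  shows "l2norm (restr (v2_subgroup - {0}) \<xi>)
    \<le> max (2 * B / sqrt (real N)) (2 * real N * l2norm (\<lambda>k. \<xi> (conj_u1 k) - \<xi> k))"
proof -
  let ?S = "v2_subgroup - {0}"
  let ?e = "l2norm (\<lambda>k. \<xi> (conj_u1 k) - \<xi> k)"
  let ?s = "\<lambda>m. l2norm (restr ((conj_u1 ^^ m) ` ?S) \<xi>)"
  have shift: "l2norm (restr ?S \<xi>) \<le> ?s m + real N * ?e" if "m < N" for m
  proof -
    have "l2norm (restr ?S \<xi>) \<le> ?s m + l2norm (\<lambda>k. \<xi> ((conj_u1 ^^ m) k) - \<xi> k)"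
      by (rule l2norm_restr_le_image[OF bij_betw_funpow[OF bij_conj_u1] \<xi>])
    also have "l2norm (\<lambda>k. \<xi> ((conj_u1 ^^ m) k) - \<xi> k) \<le> real m * ?e"
      by (rule l2norm_funpow_diff_le[OF bij_conj_u1 \<xi>])
    also have "real m * ?e \<le> real N * ?e"
      using that l2norm_nonneg by (simp add: mult_right_mono)
    finally show ?thesis by simp
  qed
  have "(\<Sum>m<N. (?s m)\<^sup>2) \<le> l2sq \<xi>"
    unfolding l2norm_power2
    by (rule sum_l2sq_restr_le[OF \<xi>]) (use disjoint_conj_u1_funpow_image in auto)
  also have "\<dots> \<le> B\<^sup>2" using power_mono[OF B l2norm_nonneg, of 2] by (simp add: l2norm_power2)
  finally have "(\<Sum>m<N. (?s m)\<^sup>2) \<le> B\<^sup>2" .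
  with le_max_of_sum_power2_le[OF \<open>N > 0\<close> l2norm_nonneg order_trans[OF l2norm_nonneg B] shift]
  show ?thesis by (simp add: mult.assoc)
qed

lemma l2norm_restr_v2_subgroup_le:
  assumes "\<xi> \<in> l2" and "l2norm \<xi> \<le> B" and "N > 0"
  shows "l2norm (restr v2_subgroup \<xi>)
    \<le> cmod (\<xi> 0) + max (2 * B / sqrt (real N)) (2 * real N * l2norm (\<lambda>k. \<xi> (conj_u1 k) - \<xi> k))"
proof -
  have "restr v2_subgroup \<xi> = (\<lambda>k. \<xi> 0 * delta 0 k + restr (v2_subgroup - {0}) \<xi> k)"
    by (auto simp: restr_def delta_def)
  then have "l2norm (restr v2_subgroup \<xi>)
      \<le> l2norm (\<lambda>k. \<xi> 0 * delta 0 k) + l2norm (restr (v2_subgroup - {0}) \<xi>)"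
    using l2_add(2)[OF l2_scale[OF delta_l2] l2_restr[OF assms(1)]] by simp
  moreover have "l2norm (\<lambda>k. \<xi> 0 * delta 0 k) \<le> cmod (\<xi> 0) * l2norm (delta 0)"
    by (rule l2_dominated(2)[OF delta_l2]) (simp_all add: norm_mult)
  then have "l2norm (\<lambda>k. \<xi> 0 * delta 0 k) \<le> cmod (\<xi> 0)" by simp
  ultimately show ?thesis using l2norm_restr_v2_nonzero_le[OF assms] by linarith
qed

lemma tendsto_zero_by_tradeoff:
  fixes X a e :: "'a \<Rightarrow> real"
  assumes bound: "\<And>n N. N > 0 \<Longrightarrow> X n \<le> a n + max (2 * B / sqrt (real N)) (2 * real N * e n)"
    and "\<And>n. X n \<ge> 0" and "B \<ge> 0" and a: "(a \<longlongrightarrow> 0) F" and e: "(e \<longlongrightarrow> 0) F"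
  shows "(X \<longlongrightarrow> 0) F"
proof (rule tendstoI)
  fix \<eta> :: real assume "\<eta> > 0"
  define N where "N = nat \<lceil>(6 * B / \<eta>)\<^sup>2\<rceil> + 1"
  have "N > 0" unfolding N_def by simp
  have "(6 * B / \<eta>)\<^sup>2 < real N" unfolding N_def by linarith
  then have "6 * B / \<eta> < sqrt (real N)" by (rule real_less_rsqrt)
  then have "6 * B < \<eta> * sqrt (real N)" using \<open>\<eta> > 0\<close> by (simp add: divide_less_eq mult.commute)
  then have small: "2 * B / sqrt (real N) < \<eta> / 3" using \<open>N > 0\<close> by (simp add: divide_less_eq)
  have "eventually (\<lambda>n. dist (a n) 0 < \<eta> / 3) F"
    using tendstoD[OF a, of "\<eta> / 3"] \<open>\<eta> > 0\<close> by simp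
  moreover have "eventually (\<lambda>n. dist (e n) 0 < \<eta> / (6 * real N)) F"
    using tendstoD[OF e, of "\<eta> / (6 * real N)"] \<open>\<eta> > 0\<close> \<open>N > 0\<close> by simp
  ultimately show "eventually (\<lambda>n. dist (X n) 0 < \<eta>) F"
  proof eventually_elim
    case (elim n)
    have "a n < \<eta> / 3" using elim(1) by (simp add: dist_real_def)
    moreover have "e n < \<eta> / (6 * real N)" using elim(2) by (simp add: dist_real_def)
    then have "2 * real N * e n < \<eta> / 3"
      using \<open>N > 0\<close> by (simp add: less_divide_eq mult.commute mult.left_commute)
    ultimately show ?case using bound[OF \<open>N > 0\<close>, of n] small \<open>X n \<ge> 0\<close> by (simp add: dist_real_def)
  qed
qed

lemma l2norm_restr_v2_subgroup_tendsto_zero: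
  assumes "\<And>n. \<xi> n \<in> l2" and "\<And>n. l2norm (\<xi> n) \<le> B"
    and "((\<lambda>n. \<xi> n 0) \<longlongrightarrow> 0) F"
    and "((\<lambda>n. l2norm (\<lambda>k. \<xi> n (conj_u1 k) - \<xi> n k)) \<longlongrightarrow> 0) F"
  shows "((\<lambda>n. l2norm (restr v2_subgroup (\<xi> n))) \<longlongrightarrow> 0) F"
proof (rule tendsto_zero_by_tradeoff[where a = "\<lambda>n. cmod (\<xi> n 0)"
      and e = "\<lambda>n. l2norm (\<lambda>k. \<xi> n (conj_u1 k) - \<xi> n k)" and B = B])
  show "l2norm (restr v2_subgroup (\<xi> n))
      \<le> cmod (\<xi> n 0) + max (2 * B / sqrt (real N)) (2 * real N * l2norm (\<lambda>k. \<xi> n (conj_u1 k) - \<xi> n k))"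
    if "N > 0" for n N
    by (rule l2norm_restr_v2_subgroup_le[OF assms(1,2) that])
  show "B \<ge> 0" using assms(2) l2norm_nonneg order_trans by blast
  show "((\<lambda>n. cmod (\<xi> n 0)) \<longlongrightarrow> 0) F" using assms(3) by (rule tendsto_norm_zero)
qed (use assms(4) l2norm_nonneg in auto)

lemma l2norm_commutator_lambda_op_u1:
  assumes x: "x \<in> LG"
  shows "l2norm (\<lambda>g. (lambda_op u1 \<circ> x) delta_e g - (x \<circ> lambda_op u1) delta_e g)
    = l2norm (\<lambda>k. x (delta 0) (conj_u1 k) - x (delta 0) k)"
proof -
  define \<xi> where "\<xi> = x (delta 0)"
  have "\<xi> \<in> l2" unfolding \<xi>_def by (rule bop_l2[OF LG_bop[OF x] delta_l2])
  then have "(lambda_op u1 \<circ> x) delta_e = (\<lambda>h. \<xi> (- u1 + h))"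
    by (simp add: delta_e_eq \<xi>_def lambda_op_apply)
  moreover have "(x \<circ> lambda_op u1) delta_e = (\<lambda>h. \<xi> (h + - u1))"
    by (simp add: delta_e_eq \<xi>_def fun_eq_iff LG_delta[OF x, of u1] flip: delta_add_eq_lambda_op)
  moreover have "l2norm (\<lambda>h. \<xi> (- u1 + h) - \<xi> (h + - u1))
      = l2norm (\<lambda>k. \<xi> (- u1 + (u1 + k)) - \<xi> ((u1 + k) + - u1))"
    using l2_reindex(2)[OF bij_plus[of u1], of "\<lambda>h. \<xi> (- u1 + h) - \<xi> (h + - u1)"] by simp
  moreover have "\<dots> = l2norm (\<lambda>k. \<xi> (conj_u1 k) - \<xi> k)"
    using l2norm_uminus[of "\<lambda>k. \<xi> (conj_u1 k) - \<xi> k"] by (simp add: conj_u1_def)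
  ultimately show ?thesis by (simp add: \<xi>_def)
qed

theorem lemma6p10:
  fixes U :: "nat filter" and W :: "nat \<Rightarrow> op"
  assumes "free_ultrafilter U"
    and "haar_unitary_U U W"
    and "ueq U (\<lambda>n. lambda_op (rgen U1) \<circ> W n) (\<lambda>n. W n \<circ> lambda_op (rgen U1))"
  shows "ueq U (\<lambda>n. condexp vN_v2 (W n)) (\<lambda>n. zero_op)"
proof -
  obtain C where W: "\<And>n. W n \<in> LG" and C: "\<And>n f. f \<in> l2 \<Longrightarrow> l2norm (W n f) \<le> C * l2norm f"
    using assms(2) unfolding haar_unitary_U_def in_ultrapower_def by blast
  have "((\<lambda>n. tau (W n ^^ 1)) \<longlongrightarrow> 0) U"
    using assms(2) unfolding haar_unitary_U_def by blast
  then have tau: "((\<lambda>n. W n (delta 0) 0) \<longlongrightarrow> 0) U" by (simp add: tau_eq)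
  have "((\<lambda>n. l2norm (restr v2_subgroup (W n (delta 0)))) \<longlongrightarrow> 0) U"
  proof (rule l2norm_restr_v2_subgroup_tendsto_zero[where \<xi> = "\<lambda>n. W n (delta 0)", OF _ _ tau])
    show "W n (delta 0) \<in> l2" for n by (rule bop_l2[OF LG_bop[OF W] delta_l2])
    show "l2norm (W n (delta 0)) \<le> C" for n using C[of "delta 0" n] by simp
    show "((\<lambda>n. l2norm (\<lambda>k. W n (delta 0) (conj_u1 k) - W n (delta 0) k)) \<longlongrightarrow> 0) U"
      using assms(3) unfolding ueq_def l2norm_commutator_lambda_op_u1[OF W, unfolded u1_def] .
  qed
  then show ?thesis
    unfolding ueq_def condexp_vN_v2_delta_e[OF W] by (simp add: delta_e_eq zero_op_def)
qed

end
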